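(* If $X$ is a locally finite simplicial set, then $\mathbb Z^{(X)}$ is a free abelian group.
   Context: $\mathbb Z^{\Delta^n}=\mathbb Z[t_0,\dots,t_n]/(t_0+\dots+t_n-1)$ forms a simplicial ring; $\mathbb Z^X=\hom_{\mathrm{sSet}}(X,\mathbb Z^{\Delta^\bullet})$; the support of $\phi$ is the simplicial subset generated by simplices on which $\phi$ is nonzero; $\mathbb Z^{(X)}\subset\mathbb Z^X$ consists of finitely supported elements. $X$ is locally finite if every simplex is a face of only finitely many nondegenerate simplices. *)

theory Defs
  imports Complex_Main "HOL-Library.Function_Algebras"
begin

text \<open>A monotone map [m] -> [n] of the simplex category, represented by a function
  nat => nat whose values on {0..m} are relevant.\<close>
definition mono_map :: "(nat \<Rightarrow> nat) \<Rightarrow> nat \<Rightarrow> nat \<Rightarrow> bool" where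
  "mono_map \<theta> m n \<longleftrightarrow> (\<forall>i\<le>m. \<theta> i \<le> n) \<and> (\<forall>i j. i \<le> j \<and> j \<le> m \<longrightarrow> \<theta> i \<le> \<theta> j)"

text \<open>A simplicial set: sets of n-simplices X n and, for every monotone
  theta : [m] -> [n], the induced map act theta m n : X n -> X m (contravariant functor).\<close>
definition simplicial_set :: "(nat \<Rightarrow> 'a set) \<Rightarrow> ((nat \<Rightarrow> nat) \<Rightarrow> nat \<Rightarrow> nat \<Rightarrow> 'a \<Rightarrow> 'a) \<Rightarrow> bool" where
  "simplicial_set X act \<longleftrightarrow>
     (\<forall>m n \<theta> x. mono_map \<theta> m n \<and> x \<in> X n \<longrightarrow> act \<theta> m n x \<in> X m) \<and>
     (\<forall>n x. x \<in> X n \<longrightarrow> act id n n x = x) \<and>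
     (\<forall>k m n \<theta> \<psi> x. mono_map \<psi> k m \<and> mono_map \<theta> m n \<and> x \<in> X n \<longrightarrow>
         act (\<theta> \<circ> \<psi>) k n x = act \<psi> k m (act \<theta> m n x)) \<and>
     (\<forall>m n \<theta> \<theta>' x. (\<forall>i\<le>m. \<theta> i = \<theta>' i) \<and> x \<in> X n \<longrightarrow> act \<theta> m n x = act \<theta>' m n x)"

definition degenerate :: "(nat \<Rightarrow> 'a set) \<Rightarrow> ((nat \<Rightarrow> nat) \<Rightarrow> nat \<Rightarrow> nat \<Rightarrow> 'a \<Rightarrow> 'a) \<Rightarrow> nat \<Rightarrow> 'a \<Rightarrow> bool" where
  "degenerate X act n x \<longleftrightarrow> (\<exists>m<n. \<exists>\<theta> y. mono_map \<theta> n m \<and> y \<in> X m \<and> x = act \<theta> n m y)"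

definition nondegenerate :: "(nat \<Rightarrow> 'a set) \<Rightarrow> ((nat \<Rightarrow> nat) \<Rightarrow> nat \<Rightarrow> nat \<Rightarrow> 'a \<Rightarrow> 'a) \<Rightarrow> nat \<Rightarrow> 'a \<Rightarrow> bool" where
  "nondegenerate X act n x \<longleftrightarrow> x \<in> X n \<and> \<not> degenerate X act n x"

definition is_face_of :: "(nat \<Rightarrow> 'a set) \<Rightarrow> ((nat \<Rightarrow> nat) \<Rightarrow> nat \<Rightarrow> nat \<Rightarrow> 'a \<Rightarrow> 'a) \<Rightarrow> nat \<Rightarrow> 'a \<Rightarrow> nat \<Rightarrow> 'a \<Rightarrow> bool" where
  "is_face_of X act n y m x \<longleftrightarrow> x \<in> X m \<and>
     (\<exists>\<theta>. mono_map \<theta> n m \<and> inj_on \<theta> {0..n} \<and> y = act \<theta> n m x)"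

definition locally_finite :: "(nat \<Rightarrow> 'a set) \<Rightarrow> ((nat \<Rightarrow> nat) \<Rightarrow> nat \<Rightarrow> nat \<Rightarrow> 'a \<Rightarrow> 'a) \<Rightarrow> bool" where
  "locally_finite X act \<longleftrightarrow>
     (\<forall>n y. y \<in> X n \<longrightarrow>
        finite {(m, x). nondegenerate X act m x \<and> is_face_of X act n y m x})"

text \<open>Z[t_0,...,t_n]/(t_0+...+t_n-1) is realised (isomorphically, as the quotient is
  torsion free polynomial ring Z[t_1..t_n] and R is infinite) as the ring of functions on the
  affine hyperplane H n = {t. t_0+...+t_n = 1} (inside R^(0..n)) given by integer polynomials.
  Functions are made extensional: value 0 off H n.\<close>
definition hyperplane :: "nat \<Rightarrow> (nat \<Rightarrow> real) set" where
  "hyperplane n = {t. (\<forall>i>n. t i = 0) \<and> (\<Sum>i\<le>n. t i) = 1}"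

inductive_set int_polyfun :: "nat \<Rightarrow> ((nat \<Rightarrow> real) \<Rightarrow> real) set" for n :: nat where
  const: "(\<lambda>_. of_int c) \<in> int_polyfun n"
| var: "i \<le> n \<Longrightarrow> (\<lambda>t. t i) \<in> int_polyfun n"
| add: "p \<in> int_polyfun n \<Longrightarrow> q \<in> int_polyfun n \<Longrightarrow> (\<lambda>t. p t + q t) \<in> int_polyfun n"
| mult: "p \<in> int_polyfun n \<Longrightarrow> q \<in> int_polyfun n \<Longrightarrow> (\<lambda>t. p t * q t) \<in> int_polyfun n"

definition Zdelta :: "nat \<Rightarrow> ((nat \<Rightarrow> real) \<Rightarrow> real) set" where
  "Zdelta n = {(\<lambda>t. if t \<in> hyperplane n then p t else 0) | p. p \<in> int_polyfun n}"

text \<open>For theta : [m] -> [n], theta_* : H m -> H n, (theta_* s)_j = sum of s_i over theta i = j;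
  theta^* : Z^{Delta^n} -> Z^{Delta^m} is precomposition with theta_*
  (i.e. t_j maps to the sum of t_i over theta i = j).\<close>
definition push :: "(nat \<Rightarrow> nat) \<Rightarrow> nat \<Rightarrow> (nat \<Rightarrow> real) \<Rightarrow> (nat \<Rightarrow> real)" where
  "push \<theta> m s = (\<lambda>j. \<Sum>i\<in>{i. i \<le> m \<and> \<theta> i = j}. s i)"

definition pull :: "(nat \<Rightarrow> nat) \<Rightarrow> nat \<Rightarrow> ((nat \<Rightarrow> real) \<Rightarrow> real) \<Rightarrow> ((nat \<Rightarrow> real) \<Rightarrow> real)" where
  "pull \<theta> m g = (\<lambda>s. if s \<in> hyperplane m then g (push \<theta> m s) else 0)"

text \<open>Z^X = hom_sSet(X, Z^{Delta^bullet}): natural families phi n x in Z^{Delta^n}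
  (extended by 0 outside the simplices), with pointwise group structure.\<close>
definition ZX :: "(nat \<Rightarrow> 'a set) \<Rightarrow> ((nat \<Rightarrow> nat) \<Rightarrow> nat \<Rightarrow> nat \<Rightarrow> 'a \<Rightarrow> 'a)
                  \<Rightarrow> (nat \<Rightarrow> 'a \<Rightarrow> (nat \<Rightarrow> real) \<Rightarrow> real) set" where
  "ZX X act = {\<phi>. (\<forall>n x. x \<in> X n \<longrightarrow> \<phi> n x \<in> Zdelta n) \<and>
                   (\<forall>n x. x \<notin> X n \<longrightarrow> \<phi> n x = (\<lambda>_. 0)) \<and>
                   (\<forall>m n \<theta> x. mono_map \<theta> m n \<and> x \<in> X n \<longrightarrow>
                        \<phi> m (act \<theta> m n x) = pull \<theta> m (\<phi> n x))}"

definition support :: "(nat \<Rightarrow> 'a set) \<Rightarrow> ((nat \<Rightarrow> nat) \<Rightarrow> nat \<Rightarrow> nat \<Rightarrow> 'a \<Rightarrow> 'a)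
                  \<Rightarrow> (nat \<Rightarrow> 'a \<Rightarrow> (nat \<Rightarrow> real) \<Rightarrow> real) \<Rightarrow> nat \<Rightarrow> 'a set" where
  "support X act \<phi> n = {act \<theta> n k x | \<theta> k x. mono_map \<theta> n k \<and> x \<in> X k \<and> \<phi> k x \<noteq> (\<lambda>_. 0)}"

text \<open>A simplicial subset is finite iff it has finitely many nondegenerate simplices
  (nondegeneracy in a simplicial subset agrees with nondegeneracy in X).\<close>
definition finitely_supported :: "(nat \<Rightarrow> 'a set) \<Rightarrow> ((nat \<Rightarrow> nat) \<Rightarrow> nat \<Rightarrow> nat \<Rightarrow> 'a \<Rightarrow> 'a)
                  \<Rightarrow> (nat \<Rightarrow> 'a \<Rightarrow> (nat \<Rightarrow> real) \<Rightarrow> real) \<Rightarrow> bool" where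
  "finitely_supported X act \<phi> \<longleftrightarrow>
     finite {(n, y). y \<in> support X act \<phi> n \<and> nondegenerate X act n y}"

definition ZX_fin :: "(nat \<Rightarrow> 'a set) \<Rightarrow> ((nat \<Rightarrow> nat) \<Rightarrow> nat \<Rightarrow> nat \<Rightarrow> 'a \<Rightarrow> 'a)
                  \<Rightarrow> (nat \<Rightarrow> 'a \<Rightarrow> (nat \<Rightarrow> real) \<Rightarrow> real) set" where
  "ZX_fin X act = {\<phi> \<in> ZX X act. finitely_supported X act \<phi>}"

definition zsmult :: "int \<Rightarrow> 'g::ab_group_add \<Rightarrow> 'g" where
  "zsmult k g = (if 0 \<le> k then (\<Sum>_<nat k. g) else - (\<Sum>_<nat (- k). g))"

definition free_abelian_subgroup :: "'g::ab_group_add set \<Rightarrow> bool" where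
  "free_abelian_subgroup G \<longleftrightarrow>
     0 \<in> G \<and> (\<forall>a\<in>G. \<forall>b\<in>G. a - b \<in> G) \<and>
     (\<exists>B\<subseteq>G. \<forall>g\<in>G. \<exists>!c :: 'g \<Rightarrow> int.
        (\<forall>b. b \<notin> B \<longrightarrow> c b = 0) \<and> finite {b. c b \<noteq> 0} \<and>
        g = (\<Sum>b\<in>{b. c b \<noteq> 0}. zsmult (c b) b))"

end

theory Submission
  imports Defs "HOL-Computational_Algebra.Polynomial"
begin

text \<open>
  An element \<open>\<phi>\<close> of \<open>\<int>\<^sup>(\<^sup>X\<^sup>)\<close> is determined by its values on the nondegenerate
  simplices, each value being an integer polynomial on the hyperplane \<open>t\<^sub>0 + \<dots> + t\<^sub>n = 1\<close>.
  In the affine chart \<open>(t\<^sub>1, \<dots>, t\<^sub>n)\<close> such a polynomial is determined by its Newton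
  coefficients: the iterated forward differences at the origin of its restriction to the
  lattice of natural points. These coefficients are integers, only finitely many are nonzero,
  and they depend additively on \<open>\<phi>\<close>. Hence \<open>\<int>\<^sup>(\<^sup>X\<^sup>)\<close> embeds into a direct sum of copies
  of \<open>\<int>\<close>, and a subgroup of such a direct sum is free abelian.
\<close>

lemma zsmult_0 [simp]: "zsmult 0 g = 0"
  by (simp add: zsmult_def)

lemma zsmult_plus_1: "zsmult (k + 1) g = zsmult k g + (g::'g::ab_group_add)"
proof -
  consider "0 \<le> k" | "k = -1" | "k < -1" by linarith
  then show ?thesis
  proof cases
    case 1
    then have "nat (k + 1) = Suc (nat k)" by simp
    with 1 show ?thesis by (simp add: zsmult_def)
  next
    case 2
    then show ?thesis by (simp add: zsmult_def)
  next
    case 3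
    then have "nat (- k) = Suc (nat (- (k + 1)))" by linarith
    with 3 show ?thesis by (simp add: zsmult_def)
  qed
qed

lemma zsmult_add: "zsmult (a + b) g = zsmult a g + zsmult b (g::'g::ab_group_add)"
proof (induction b rule: int_induct[where k = 0])
  case base
  then show ?case by simp
next
  case (step1 i)
  then show ?case using zsmult_plus_1[of "a + i" g] zsmult_plus_1[of i g]
    by (simp add: algebra_simps)
next
  case (step2 i)
  then show ?case using zsmult_plus_1[of "a + (i - 1)" g] zsmult_plus_1[of "i - 1" g]
    by (simp add: algebra_simps)
qed

lemma zsmult_diff: "zsmult (a - b) g = zsmult a g - zsmult b (g::'g::ab_group_add)"
  using zsmult_add[of "a - b" b g] by (simp add: algebra_simps)

subsection \<open>A freeness criterion\<close>

text \<open>Well-ordering the indices by \<open>r\<close>, the argument showing that subgroups of free abelian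
  groups are free applies: for every index \<open>\<alpha>\<close> pick a pivot element supported at indices
  \<open>\<le> \<alpha>\<close> whose \<open>\<alpha>\<close>-coordinate is the least positive one possible.\<close>

locale functional_embedding =
  fixes G :: "'g::ab_group_add set" and L :: "'i \<Rightarrow> 'g \<Rightarrow> int" and r :: "'i rel"
  assumes zero_in [simp]: "0 \<in> G"
    and diff_in: "a \<in> G \<Longrightarrow> b \<in> G \<Longrightarrow> a - b \<in> G"
    and L_diff: "a \<in> G \<Longrightarrow> b \<in> G \<Longrightarrow> L i (a - b) = L i a - L i b"
    and L_finite: "g \<in> G \<Longrightarrow> finite {i. L i g \<noteq> 0}"
    and L_injective: "g \<in> G \<Longrightarrow> \<forall>i. L i g = 0 \<Longrightarrow> g = 0"
    and well_order: "well_order_on UNIV r"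
begin

lemma L_zero [simp]: "L i 0 = 0"
  using L_diff[of 0 0] by simp

lemma L_minus: "g \<in> G \<Longrightarrow> L i (- g) = - L i g"
  using L_diff[of 0 g] by simp

lemma minus_in: "g \<in> G \<Longrightarrow> - g \<in> G"
  using diff_in[of 0 g] by simp

lemma add_in: "a \<in> G \<Longrightarrow> b \<in> G \<Longrightarrow> a + b \<in> G"
  using diff_in[of a "- b"] minus_in by simp

lemma L_add: "a \<in> G \<Longrightarrow> b \<in> G \<Longrightarrow> L i (a + b) = L i a + L i b"
  using L_diff[of a "- b"] minus_in L_minus by simp

lemma zsmult_in_and_L:
  assumes "g \<in> G"
  shows "zsmult k g \<in> G \<and> L i (zsmult k g) = k * L i g"
proof (induction k rule: int_induct[where k = 0])
  case base
  then show ?case by simp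
next
  case (step1 k)
  then show ?case
    using assms zsmult_plus_1[of k g] add_in L_add by (simp add: algebra_simps)
next
  case (step2 k)
  have eq: "zsmult (k - 1) g = zsmult k g - g" using zsmult_plus_1[of "k - 1" g] by simp
  show ?case
    unfolding eq using step2 assms diff_in L_diff by (simp add: algebra_simps)
qed

lemma zsmult_in: "g \<in> G \<Longrightarrow> zsmult k g \<in> G"
  and L_zsmult: "g \<in> G \<Longrightarrow> L i (zsmult k g) = k * L i g"
  using zsmult_in_and_L by blast+

lemma sum_in_and_L:
  assumes "finite T" and "\<And>b. b \<in> T \<Longrightarrow> f b \<in> G"
  shows "sum f T \<in> G \<and> L i (sum f T) = (\<Sum>b\<in>T. L i (f b))"
  using assms by (induction T rule: finite_induct) (auto simp: add_in L_add)

lemma r_refl: "(a, a) \<in> r"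
  and r_total: "a \<noteq> b \<Longrightarrow> (a, b) \<in> r \<or> (b, a) \<in> r"
  and r_trans: "(a, b) \<in> r \<Longrightarrow> (b, c) \<in> r \<Longrightarrow> (a, c) \<in> r"
  and r_antisym: "(a, b) \<in> r \<Longrightarrow> (b, a) \<in> r \<Longrightarrow> a = b"
  and r_wf: "wf (r - Id)"
  using well_order
  unfolding well_order_on_def linear_order_on_def partial_order_on_def preorder_on_def
  by (auto simp: refl_on_def total_on_def antisym_def elim: transE)

lemma finite_has_top:
  "finite Y \<Longrightarrow> Y \<noteq> {} \<Longrightarrow> \<exists>m\<in>Y. \<forall>y\<in>Y. (y, m) \<in> r"
proof (induction Y rule: finite_ne_induct)
  case (singleton x)
  then show ?case using r_refl by auto
next
  case (insert x Y)
  then obtain m where "m \<in> Y" "\<forall>y\<in>Y. (y, m) \<in> r" by blast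
  then show ?case using r_refl r_total[of x m] r_trans by blast
qed

definition below :: "'i \<Rightarrow> 'g set" where
  "below \<alpha> = {g \<in> G. \<forall>i. L i g \<noteq> 0 \<longrightarrow> (i, \<alpha>) \<in> r}"

lemma below_diff: "a \<in> below \<alpha> \<Longrightarrow> b \<in> below \<alpha> \<Longrightarrow> a - b \<in> below \<alpha>"
  unfolding below_def by (auto simp: diff_in L_diff) metis

lemma below_zsmult: "g \<in> below \<alpha> \<Longrightarrow> zsmult k g \<in> below \<alpha>"
  unfolding below_def by (auto simp: zsmult_in L_zsmult)

lemma top_index:
  assumes "g \<in> G" and "g \<noteq> 0"
  obtains \<alpha> where "g \<in> below \<alpha>" and "L \<alpha> g \<noteq> 0"
proof -
  have "{i. L i g \<noteq> 0} \<noteq> {}" using assms L_injective by auto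
  then obtain \<alpha> where "\<alpha> \<in> {i. L i g \<noteq> 0}" "\<forall>i\<in>{i. L i g \<noteq> 0}. (i, \<alpha>) \<in> r"
    using finite_has_top[OF L_finite[OF assms(1)]] by blast
  then show ?thesis using that assms(1) unfolding below_def by auto
qed

definition pivots :: "'i set" where
  "pivots = {\<alpha>. \<exists>g\<in>below \<alpha>. L \<alpha> g \<noteq> 0}"

definition step :: "'i \<Rightarrow> nat" where
  "step \<alpha> = (LEAST n. 0 < n \<and> (\<exists>g\<in>below \<alpha>. L \<alpha> g = int n))"

definition pivot :: "'i \<Rightarrow> 'g" where
  "pivot \<alpha> = (SOME g. g \<in> below \<alpha> \<and> L \<alpha> g = int (step \<alpha>))"

lemma step_exists:
  assumes "\<alpha> \<in> pivots"
  shows "0 < step \<alpha> \<and> (\<exists>g\<in>below \<alpha>. L \<alpha> g = int (step \<alpha>))"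
proof -
  obtain g where g: "g \<in> below \<alpha>" "L \<alpha> g \<noteq> 0" using assms unfolding pivots_def by auto
  have "zsmult (sgn (L \<alpha> g)) g \<in> below \<alpha>" using g(1) by (rule below_zsmult)
  moreover have "L \<alpha> (zsmult (sgn (L \<alpha> g)) g) = int (nat \<bar>L \<alpha> g\<bar>)"
    using g below_def L_zsmult by (simp add: abs_if sgn_if)
  ultimately have "\<exists>n. 0 < n \<and> (\<exists>g\<in>below \<alpha>. L \<alpha> g = int n)"
    using g(2) by (intro exI[of _ "nat \<bar>L \<alpha> g\<bar>"]) auto
  then show ?thesis unfolding step_def by (rule LeastI_ex)
qed

lemma pivot:
  assumes "\<alpha> \<in> pivots"
  shows "pivot \<alpha> \<in> below \<alpha>" and "L \<alpha> (pivot \<alpha>) = int (step \<alpha>)" and "0 < step \<alpha>"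
  using step_exists[OF assms] someI_ex[of "\<lambda>g. g \<in> below \<alpha> \<and> L \<alpha> g = int (step \<alpha>)"]
  unfolding pivot_def by auto

text \<open>By minimality, \<open>step \<alpha>\<close> divides the top coordinate of everything below \<open>\<alpha>\<close>.\<close>

lemma step_dvd:
  assumes \<alpha>: "\<alpha> \<in> pivots" and g: "g \<in> below \<alpha>"
  shows "int (step \<alpha>) dvd L \<alpha> g"
proof (rule ccontr)
  assume not_dvd: "\<not> int (step \<alpha>) dvd L \<alpha> g"
  define d where "d = int (step \<alpha>)"
  have d: "0 < d" using pivot(3)[OF \<alpha>] by (simp add: d_def)
  define g' where "g' = g - zsmult (L \<alpha> g div d) (pivot \<alpha>)"
  have g': "g' \<in> below \<alpha>"
    unfolding g'_def using g pivot(1)[OF \<alpha>] by (intro below_diff below_zsmult)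
  have "L \<alpha> g' = L \<alpha> g - L \<alpha> g div d * d"
    using g pivot[OF \<alpha>] unfolding g'_def d_def below_def by (simp add: L_diff L_zsmult zsmult_in)
  then have "L \<alpha> g' = L \<alpha> g mod d" by (simp add: minus_div_mult_eq_mod)
  moreover have "L \<alpha> g mod d \<noteq> 0" using not_dvd by (simp add: d_def dvd_eq_mod_eq_0)
  then have "0 < L \<alpha> g mod d" using pos_mod_sign[OF d, of "L \<alpha> g"] by linarith
  moreover have "L \<alpha> g mod d < d" using d by simp
  ultimately have "step \<alpha> \<le> nat (L \<alpha> g mod d)"
    unfolding step_def using g' by (intro Least_le) auto
  with \<open>0 < L \<alpha> g mod d\<close> \<open>L \<alpha> g mod d < d\<close> show False by (simp add: d_def le_nat_iff)
qed

lemma pivot_inj: "inj_on pivot pivots"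
proof (rule inj_onI)
  fix \<alpha> \<beta> assume "\<alpha> \<in> pivots" "\<beta> \<in> pivots" "pivot \<alpha> = pivot \<beta>"
  then show "\<alpha> = \<beta>" using pivot[of \<alpha>] pivot[of \<beta>] r_antisym unfolding below_def by force
qed

definition basis :: "'g set" where
  "basis = pivot ` pivots"

definition represents :: "'g \<Rightarrow> ('g \<Rightarrow> int) \<Rightarrow> bool" where
  "represents g c \<longleftrightarrow> (\<forall>b. b \<notin> basis \<longrightarrow> c b = 0) \<and> finite {b. c b \<noteq> 0} \<and>
     g = (\<Sum>b\<in>{b. c b \<noteq> 0}. zsmult (c b) b)"

lemma basis_subset: "basis \<subseteq> G"
  using pivot(1) unfolding basis_def below_def by auto

lemma represents_sum:
  assumes "represents g c" and "finite T" and "{b. c b \<noteq> 0} \<subseteq> T"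
  shows "g = (\<Sum>b\<in>T. zsmult (c b) b)"
  using assms unfolding represents_def by (auto intro: sum.mono_neutral_left)

lemma represents_zero: "represents 0 (\<lambda>_. 0)"
  unfolding represents_def by simp

lemma represents_add:
  assumes c: "represents g c" and b0: "b0 \<in> basis"
  shows "represents (g + zsmult k b0) (c(b0 := c b0 + k))"
proof -
  define c' where "c' = c(b0 := c b0 + k)"
  define T where "T = insert b0 {b. c b \<noteq> 0}"
  have T: "finite T" "{b. c b \<noteq> 0} \<subseteq> T" "{b. c' b \<noteq> 0} \<subseteq> T" "b0 \<in> T"
    using c unfolding T_def c'_def represents_def by auto
  have split: "(\<Sum>b\<in>T. f b) = f b0 + (\<Sum>b\<in>T - {b0}. f b)" for f :: "'g \<Rightarrow> 'g"
    by (rule sum.remove[OF T(1) T(4)])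
  have "(\<Sum>b\<in>T - {b0}. zsmult (c' b) b) = (\<Sum>b\<in>T - {b0}. zsmult (c b) b)"
    by (rule sum.cong) (auto simp: c'_def)
  moreover have "zsmult (c' b0) b0 = zsmult (c b0) b0 + zsmult k b0"
    by (simp add: c'_def zsmult_add)
  ultimately have "(\<Sum>b\<in>T. zsmult (c' b) b) = (\<Sum>b\<in>T. zsmult (c b) b) + zsmult k b0"
    by (simp only: split) (simp add: algebra_simps)
  also have "\<dots> = g + zsmult k b0"
    using represents_sum[OF c T(1,2)] by simp
  finally have "g + zsmult k b0 = (\<Sum>b\<in>T. zsmult (c' b) b)" ..
  also have "\<dots> = (\<Sum>b\<in>{b. c' b \<noteq> 0}. zsmult (c' b) b)"
    by (rule sum.mono_neutral_right[OF T(1) T(3)]) simp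
  finally have "g + zsmult k b0 = (\<Sum>b\<in>{b. c' b \<noteq> 0}. zsmult (c' b) b)" .
  moreover have "\<forall>b. b \<notin> basis \<longrightarrow> c' b = 0"
    using c b0 unfolding c'_def represents_def by auto
  moreover have "finite {b. c' b \<noteq> 0}"
    using T(1,3) by (rule finite_subset[rotated])
  ultimately show ?thesis unfolding represents_def c'_def by simp
qed

lemma clear_top:
  assumes g: "g \<in> below \<alpha>"
  obtains k g' where "g' \<in> below \<alpha>" and "L \<alpha> g' = 0" and "g = g' + zsmult k (pivot \<alpha>)"
    and "k \<noteq> 0 \<Longrightarrow> \<alpha> \<in> pivots"
proof (cases "\<alpha> \<in> pivots")
  case True
  then obtain k where k: "L \<alpha> g = int (step \<alpha>) * k" using step_dvd[OF True g] by (auto elim: dvdE)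
  define g' where "g' = g - zsmult k (pivot \<alpha>)"
  have "g' \<in> below \<alpha>" unfolding g'_def using g pivot(1)[OF True] by (intro below_diff below_zsmult)
  moreover have "L \<alpha> g' = 0"
    using g pivot[OF True] k unfolding g'_def below_def by (simp add: L_diff L_zsmult zsmult_in)
  ultimately show ?thesis using that True by (simp add: g'_def)
next
  case False
  then have "L \<alpha> g = 0" using g unfolding pivots_def by auto
  then show ?thesis using that[of g 0] g by simp
qed

lemma below_represented: "g \<in> below \<alpha> \<Longrightarrow> \<exists>c. represents g c"
proof (induction \<alpha> arbitrary: g rule: wf_induct[OF r_wf])
  case (1 \<alpha>)
  obtain k g' where g': "g' \<in> below \<alpha>" "L \<alpha> g' = 0" and g: "g = g' + zsmult k (pivot \<alpha>)"
    and k: "k \<noteq> 0 \<Longrightarrow> \<alpha> \<in> pivots"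
    using clear_top[OF "1.prems"] by blast
  have "\<exists>c. represents g' c"
  proof (cases "g' = 0")
    case True
    then show ?thesis using represents_zero by auto
  next
    case False
    then obtain \<beta> where \<beta>: "g' \<in> below \<beta>" "L \<beta> g' \<noteq> 0"
      using top_index g' unfolding below_def by blast
    then have "(\<beta>, \<alpha>) \<in> r - Id" using g' unfolding below_def by auto
    then show ?thesis using "1.IH" \<beta>(1) by blast
  qed
  then obtain c where c: "represents g' c" by blast
  show ?case
  proof (cases "k = 0")
    case True
    then show ?thesis using c g by auto
  next
    case False
    then have "pivot \<alpha> \<in> basis" using k unfolding basis_def by auto
    then show ?thesis using represents_add[OF c] g by blast
  qed
qed

lemma represented:
  assumes "g \<in> G"
  shows "\<exists>c. represents g c"
proof (cases "g = 0")
  case False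
  then obtain \<alpha> where "g \<in> below \<alpha>" using top_index[OF assms] by metis
  then show ?thesis by (rule below_represented)
qed (use represents_zero in auto)

text \<open>Linear independence: apply the functional at the top index among the pivots used;
  all other pivots vanish there, so the top coefficient must be zero.\<close>

lemma independent:
  assumes T: "finite T" "T \<subseteq> basis" and zero: "(\<Sum>b\<in>T. zsmult (c b) b) = 0"
  shows "\<forall>b\<in>T. c b = 0"
proof (rule ccontr)
  assume "\<not> (\<forall>b\<in>T. c b = 0)"
  define Y where "Y = {\<alpha> \<in> pivots. pivot \<alpha> \<in> T \<and> c (pivot \<alpha>) \<noteq> 0}"
  have "pivot ` Y \<subseteq> T" unfolding Y_def by auto
  moreover have "inj_on pivot Y" using pivot_inj by (rule inj_on_subset) (auto simp: Y_def)
  ultimately have "finite Y" using T(1) finite_imageD finite_subset by metis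
  moreover have "Y \<noteq> {}"
    using \<open>\<not> (\<forall>b\<in>T. c b = 0)\<close> T(2) unfolding Y_def basis_def by auto
  ultimately obtain \<alpha> where \<alpha>: "\<alpha> \<in> Y" "\<forall>\<beta>\<in>Y. (\<beta>, \<alpha>) \<in> r"
    using finite_has_top by blast
  then have \<alpha>p: "\<alpha> \<in> pivots" and \<alpha>T: "pivot \<alpha> \<in> T" unfolding Y_def by auto
  have others: "c b * L \<alpha> b = 0" if b: "b \<in> T - {pivot \<alpha>}" for b
  proof (cases "c b = 0")
    case False
    obtain \<beta> where \<beta>: "\<beta> \<in> pivots" "b = pivot \<beta>" using b T(2) unfolding basis_def by auto
    then have "(\<beta>, \<alpha>) \<in> r" "\<beta> \<noteq> \<alpha>" using \<alpha> False b unfolding Y_def by auto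
    then have "(\<alpha>, \<beta>) \<notin> r" using r_antisym by blast
    then show ?thesis using pivot(1)[OF \<beta>(1)] \<beta>(2) unfolding below_def by auto
  qed simp
  have "0 = L \<alpha> (\<Sum>b\<in>T. zsmult (c b) b)" using zero by simp
  also have "\<dots> = (\<Sum>b\<in>T. L \<alpha> (zsmult (c b) b))"
    using sum_in_and_L[OF T(1), of "\<lambda>b. zsmult (c b) b" \<alpha>] basis_subset T(2)
    by (auto intro: zsmult_in)
  also have "\<dots> = (\<Sum>b\<in>T. c b * L \<alpha> b)"
    using basis_subset T(2) by (intro sum.cong) (auto simp: L_zsmult)
  also have "\<dots> = c (pivot \<alpha>) * L \<alpha> (pivot \<alpha>) + (\<Sum>b\<in>T - {pivot \<alpha>}. c b * L \<alpha> b)"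
    using T(1) \<alpha>T by (rule sum.remove)
  also have "\<dots> = c (pivot \<alpha>) * L \<alpha> (pivot \<alpha>)"
    using others by (simp add: sum.neutral)
  finally show False using \<alpha> pivot[OF \<alpha>p] unfolding Y_def by simp
qed

lemma represents_unique:
  assumes c1: "represents g c1" and c2: "represents g c2"
  shows "c1 = c2"
proof
  fix b
  define T where "T = {b. c1 b \<noteq> 0} \<union> {b. c2 b \<noteq> 0}"
  have T: "finite T" "T \<subseteq> basis" using c1 c2 unfolding represents_def T_def by auto
  have supp: "{b. c1 b \<noteq> 0} \<subseteq> T" "{b. c2 b \<noteq> 0} \<subseteq> T" unfolding T_def by auto
  have "(\<Sum>b\<in>T. zsmult (c1 b - c2 b) b) = (\<Sum>b\<in>T. zsmult (c1 b) b) - (\<Sum>b\<in>T. zsmult (c2 b) b)"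
    unfolding zsmult_diff by (rule sum_subtractf)
  also have "\<dots> = g - g"
    using represents_sum[OF c1 T(1) supp(1)] represents_sum[OF c2 T(1) supp(2)] by simp
  finally have "\<forall>b\<in>T. c1 b - c2 b = 0"
    using independent[OF T, of "\<lambda>b. c1 b - c2 b"] by simp
  moreover have "c1 b = 0 \<and> c2 b = 0" if "b \<notin> T" using that unfolding T_def by simp
  ultimately show "c1 b = c2 b" by (cases "b \<in> T") auto
qed

theorem free: "free_abelian_subgroup G"
  unfolding free_abelian_subgroup_def
proof (intro conjI ballI exI[of _ basis])
  fix g assume "g \<in> G"
  then obtain c where "represents g c" using represented by blast
  then have "\<exists>!c. represents g c" by (intro ex1I[of _ c]) (auto intro: represents_unique)
  then show "\<exists>!c. (\<forall>b. b \<notin> basis \<longrightarrow> c b = 0) \<and> finite {b. c b \<noteq> 0} \<and>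
      g = (\<Sum>b\<in>{b. c b \<noteq> 0}. zsmult (c b) b)"
    unfolding represents_def .
qed (use diff_in basis_subset in auto)

end

lemma free_abelian_subgroupI:
  fixes G :: "'g::ab_group_add set" and L :: "'i \<Rightarrow> 'g \<Rightarrow> int"
  assumes "0 \<in> G" and "\<And>a b. a \<in> G \<Longrightarrow> b \<in> G \<Longrightarrow> a - b \<in> G"
    and "\<And>i a b. a \<in> G \<Longrightarrow> b \<in> G \<Longrightarrow> L i (a - b) = L i a - L i b"
    and "\<And>g. g \<in> G \<Longrightarrow> finite {i. L i g \<noteq> 0}"
    and "\<And>g. g \<in> G \<Longrightarrow> \<forall>i. L i g = 0 \<Longrightarrow> g = 0"
  shows "free_abelian_subgroup G"
proof -
  obtain r :: "'i rel" where "well_order_on UNIV r" using well_order_on by blast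
  then interpret functional_embedding G L r using assms by unfold_locales
  show ?thesis by (rule free)
qed

subsection \<open>Finite differences on the lattice\<close>

type_synonym lattice_fun = "(nat \<Rightarrow> nat) \<Rightarrow> real"

definition shift :: "nat \<Rightarrow> lattice_fun \<Rightarrow> lattice_fun" where
  "shift i f = (\<lambda>k. f (k(i := Suc (k i))))"

definition fdiff :: "nat \<Rightarrow> lattice_fun \<Rightarrow> lattice_fun" where
  "fdiff i f = (\<lambda>k. shift i f k - f k)"

fun fdiffs :: "nat list \<Rightarrow> lattice_fun \<Rightarrow> lattice_fun" where
  "fdiffs [] f = f"
| "fdiffs (i # w) f = fdiffs w (fdiff i f)"

text \<open>A lattice function has difference degree at most \<open>d\<close> if all iterated differences of
  order exceeding \<open>d\<close> vanish; polynomials of total degree \<open>d\<close> have this property.\<close>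

definition diff_degree_le :: "nat \<Rightarrow> lattice_fun \<Rightarrow> bool" where
  "diff_degree_le d f \<longleftrightarrow> (\<forall>w. d < length w \<longrightarrow> fdiffs w f = (\<lambda>_. 0))"

lemma fdiffs_zero [simp]: "fdiffs w (\<lambda>_. 0) = (\<lambda>_. 0)"
  by (induction w) (auto simp: fdiff_def shift_def)

lemma fdiff_add: "fdiff i (\<lambda>k. f k + g k) = (\<lambda>k. fdiff i f k + fdiff i g k)"
  and fdiff_diff: "fdiff i (\<lambda>k. f k - g k) = (\<lambda>k. fdiff i f k - fdiff i g k)"
  by (simp_all add: fdiff_def shift_def algebra_simps)

lemma fdiffs_add: "fdiffs w (\<lambda>k. f k + g k) = (\<lambda>k. fdiffs w f k + fdiffs w g k)"
  by (induction w arbitrary: f g) (auto simp: fdiff_add)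

lemma fdiffs_diff: "fdiffs w (\<lambda>k. f k - g k) = (\<lambda>k. fdiffs w f k - fdiffs w g k)"
  by (induction w arbitrary: f g) (auto simp: fdiff_diff)

lemma fdiffs_shift: "fdiffs w (shift j f) = shift j (fdiffs w f)"
proof (induction w arbitrary: f)
  case (Cons i w)
  have "fdiff i (shift j f) = shift j (fdiff i f)"
    by (cases "i = j") (auto simp: fdiff_def shift_def fun_upd_twist)
  then show ?case using Cons by simp
qed simp

lemma fdiff_mult:
  "fdiff i (\<lambda>k. f k * g k) = (\<lambda>k. fdiff i f k * shift i g k + f k * fdiff i g k)"
  by (auto simp: fdiff_def shift_def algebra_simps)

lemma diff_degree_le_0: "diff_degree_le 0 f \<longleftrightarrow> (\<forall>i. fdiff i f = (\<lambda>_. 0))"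
proof
  assume "diff_degree_le 0 f"
  then show "\<forall>i. fdiff i f = (\<lambda>_. 0)"
    unfolding diff_degree_le_def by (metis fdiffs.simps length_Cons zero_less_Suc)
next
  assume "\<forall>i. fdiff i f = (\<lambda>_. 0)"
  then show "diff_degree_le 0 f"
    unfolding diff_degree_le_def by (auto simp: neq_Nil_conv)
qed

lemma diff_degree_le_Suc: "diff_degree_le (Suc d) f \<longleftrightarrow> (\<forall>i. diff_degree_le d (fdiff i f))"
proof
  assume "diff_degree_le (Suc d) f"
  then show "\<forall>i. diff_degree_le d (fdiff i f)"
    unfolding diff_degree_le_def by (metis fdiffs.simps(2) Suc_mono length_Cons)
next
  assume "\<forall>i. diff_degree_le d (fdiff i f)"
  then show "diff_degree_le (Suc d) f"
    unfolding diff_degree_le_def by (auto simp: length_Suc_conv Suc_less_eq2)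
qed

lemma diff_degree_le_zero: "diff_degree_le d (\<lambda>_. 0)"
  by (simp add: diff_degree_le_def)

lemma diff_degree_le_const: "diff_degree_le 0 (\<lambda>_. c)"
  by (simp add: diff_degree_le_0 fdiff_def shift_def)

lemma diff_degree_le_coord: "diff_degree_le 1 (\<lambda>k. real (k j))"
proof -
  have "fdiff i (\<lambda>k. real (k j)) = (\<lambda>_. if i = j then 1 else 0)" for i
    by (auto simp: fdiff_def shift_def)
  then show ?thesis by (simp add: diff_degree_le_Suc diff_degree_le_const)
qed

lemma diff_degree_le_add:
  "diff_degree_le a f \<Longrightarrow> diff_degree_le b g \<Longrightarrow> diff_degree_le (max a b) (\<lambda>k. f k + g k)"
  unfolding diff_degree_le_def by (auto simp: fdiffs_add)

lemma diff_degree_le_shift: "diff_degree_le a f \<Longrightarrow> diff_degree_le a (shift j f)"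
  unfolding diff_degree_le_def fdiffs_shift by (auto simp: shift_def)

lemma diff_degree_le_mult:
  "diff_degree_le a f \<Longrightarrow> diff_degree_le b g \<Longrightarrow> diff_degree_le (a + b) (\<lambda>k. f k * g k)"
proof (induction "a + b" arbitrary: a b f g)
  case 0
  then show ?case by (simp add: diff_degree_le_0 fdiff_mult)
next
  case (Suc N)
  have left: "diff_degree_le N (\<lambda>k. fdiff i f k * shift i g k)" for i
  proof (cases a)
    case 0
    then show ?thesis using Suc.prems(1) by (simp add: diff_degree_le_0 diff_degree_le_zero)
  next
    case (Suc a')
    then show ?thesis using Suc.hyps(1)[of a' b] Suc.hyps(2) Suc.prems
      by (simp add: diff_degree_le_Suc diff_degree_le_shift)
  qed
  have right: "diff_degree_le N (\<lambda>k. f k * fdiff i g k)" for i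
  proof (cases b)
    case 0
    then show ?thesis using Suc.prems(2) by (simp add: diff_degree_le_0 diff_degree_le_zero)
  next
    case (Suc b')
    then show ?thesis using Suc.hyps(1)[of a b'] Suc.hyps(2) Suc.prems
      by (simp add: diff_degree_le_Suc)
  qed
  have "diff_degree_le N (fdiff i (\<lambda>k. f k * g k))" for i
    using diff_degree_le_add[OF left right] by (simp add: fdiff_mult)
  then show ?case unfolding Suc.hyps(2)[symmetric] by (simp add: diff_degree_le_Suc)
qed

lemma fdiffs_Ints: "(\<And>k. f k \<in> \<int>) \<Longrightarrow> fdiffs w f k \<in> \<int>"
proof (induction w arbitrary: f)
  case (Cons i w)
  then show ?case by (simp add: fdiff_def shift_def)
qed simp

lemma fdiffs_at_origin_zero:
  assumes A: "finite A" and zero: "\<And>w. set w \<subseteq> A \<Longrightarrow> fdiffs w f (\<lambda>_. 0) = 0"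
    and k: "\<And>i. i \<notin> A \<Longrightarrow> k i = 0"
  shows "f k = 0"
proof -
  txt \<open>Induction on \<open>\<Sum>i\<in>A. k i\<close>, generalising over the function: stepping down in one
    direction \<open>i\<close> reduces \<open>g k\<close> to values of \<open>g\<close> and of \<open>fdiff i g\<close> at a smaller point.\<close>
  define vanishing where
    "vanishing g \<longleftrightarrow> (\<forall>w. set w \<subseteq> A \<longrightarrow> fdiffs w g (\<lambda>_. 0) = 0)" for g
  define supported where "supported k \<longleftrightarrow> (\<forall>i. i \<notin> A \<longrightarrow> k i = 0)" for k :: "nat \<Rightarrow> nat"
  have "\<forall>g k. (\<Sum>i\<in>A. k i) = n \<longrightarrow> vanishing g \<longrightarrow> supported k \<longrightarrow> g k = 0" for n
  proof (induction n)
    case 0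
    show ?case
    proof (intro allI impI)
      fix g k assume "(\<Sum>i\<in>A. k i) = 0" "vanishing g" "supported k"
      then have "k = (\<lambda>_. 0)" using A unfolding supported_def by (auto simp: fun_eq_iff)
      moreover have "fdiffs [] g (\<lambda>_. 0) = 0"
        using \<open>vanishing g\<close> unfolding vanishing_def by (metis empty_set empty_subsetI)
      ultimately show "g k = 0" by (metis fdiffs.simps(1))
    qed
  next
    case (Suc N)
    show ?case
    proof (intro allI impI)
      fix g k assume sum: "(\<Sum>i\<in>A. k i) = Suc N" and g: "vanishing g" and k: "supported k"
      obtain i where i: "i \<in> A" "0 < k i" using sum by (metis gr0I sum.neutral nat.distinct(1))
      define k' where "k' = k(i := k i - 1)"
      have "(\<Sum>j\<in>A. k j) = k i + (\<Sum>j\<in>A - {i}. k j)" using A i(1) by (rule sum.remove)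
      moreover have "(\<Sum>j\<in>A. k' j) = k' i + (\<Sum>j\<in>A - {i}. k' j)" using A i(1) by (rule sum.remove)
      moreover have "(\<Sum>j\<in>A - {i}. k' j) = (\<Sum>j\<in>A - {i}. k j)"
        unfolding k'_def by (rule sum.cong) auto
      ultimately have N: "(\<Sum>j\<in>A. k' j) = N" using sum i(2) unfolding k'_def by simp
      have k': "supported k'" using k unfolding supported_def k'_def by auto
      have "vanishing (fdiff i g)"
        using g i(1) unfolding vanishing_def by (metis fdiffs.simps(2) insert_subset list.simps(15))
      then have "g k' = 0" "fdiff i g k' = 0" using Suc.IH N g k' by blast+
      moreover have "g k = shift i g k'" using i unfolding shift_def k'_def by (simp add: fun_upd_idem)
      ultimately show "g k = 0" by (simp add: fdiff_def)
    qed
  qed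
  then show ?thesis using zero k unfolding vanishing_def supported_def by blast
qed

subsection \<open>Integer polynomial functions\<close>

inductive_set Zpoly :: "((nat \<Rightarrow> real) \<Rightarrow> real) set" where
  const: "(\<lambda>_. of_int c) \<in> Zpoly"
| coord: "(\<lambda>s. s i) \<in> Zpoly"
| add: "p \<in> Zpoly \<Longrightarrow> q \<in> Zpoly \<Longrightarrow> (\<lambda>s. p s + q s) \<in> Zpoly"
| mult: "p \<in> Zpoly \<Longrightarrow> q \<in> Zpoly \<Longrightarrow> (\<lambda>s. p s * q s) \<in> Zpoly"

lemma Zpoly_diff: "p \<in> Zpoly \<Longrightarrow> q \<in> Zpoly \<Longrightarrow> (\<lambda>s. p s - q s) \<in> Zpoly"
  using Zpoly.add[of p "\<lambda>s. - q s"] Zpoly.mult[OF Zpoly.const[of "-1"], of q] by simp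

lemma Zpoly_sum: "finite S \<Longrightarrow> (\<And>j. j \<in> S \<Longrightarrow> g j \<in> Zpoly) \<Longrightarrow> (\<lambda>s. \<Sum>j\<in>S. g j s) \<in> Zpoly"
proof (induction S rule: finite_induct)
  case empty
  then show ?case using Zpoly.const[of 0] by simp
next
  case (insert x S)
  then show ?case using Zpoly.add[of "g x" "\<lambda>s. \<Sum>j\<in>S. g j s"] by simp
qed

lemma Zpoly_univariate:
  "f \<in> Zpoly \<Longrightarrow> \<exists>P. (\<forall>s r. P (s(i := r)) = P s) \<and> (\<forall>s. f s = poly (P s) (s i))"
proof (induction f rule: Zpoly.induct)
  case (const c)
  show ?case by (rule exI[of _ "\<lambda>_. [:of_int c:]"]) simp
next
  case (coord j)
  show ?case
  proof (cases "j = i")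
    case True
    then show ?thesis by (intro exI[of _ "\<lambda>_. [:0, 1:]"]) simp
  next
    case False
    then show ?thesis by (intro exI[of _ "\<lambda>s. [:s j:]"]) simp
  qed
next
  case (add p q)
  then obtain P Q where P: "\<forall>s r. P (s(i := r)) = P s" "\<forall>s. p s = poly (P s) (s i)"
    and Q: "\<forall>s r. Q (s(i := r)) = Q s" "\<forall>s. q s = poly (Q s) (s i)" by blast
  have "\<forall>s r. P (s(i := r)) + Q (s(i := r)) = P s + Q s" using P(1) Q(1) by metis
  moreover have "\<forall>s. p s + q s = poly (P s + Q s) (s i)" using P(2) Q(2) by simp
  ultimately show ?case by (intro exI[of _ "\<lambda>s. P s + Q s"]) blast
next
  case (mult p q)
  then obtain P Q where P: "\<forall>s r. P (s(i := r)) = P s" "\<forall>s. p s = poly (P s) (s i)"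
    and Q: "\<forall>s r. Q (s(i := r)) = Q s" "\<forall>s. q s = poly (Q s) (s i)" by blast
  have "\<forall>s r. P (s(i := r)) * Q (s(i := r)) = P s * Q s" using P(1) Q(1) by metis
  moreover have "\<forall>s. p s * q s = poly (P s * Q s) (s i)" using P(2) Q(2) by simp
  ultimately show ?case by (intro exI[of _ "\<lambda>s. P s * Q s"]) blast
qed

text \<open>Each variable is freed in
  turn, since a univariate polynomial with infinitely many roots is zero.\<close>

lemma Zpoly_vanishes:
  assumes f: "f \<in> Zpoly" and A: "finite A"
    and zero: "\<And>s. (\<forall>i\<in>A. s i \<in> \<nat>) \<Longrightarrow> f s = 0"
  shows "f s = 0"
  using A zero
proof (induction A arbitrary: s rule: finite_induct)
  case (insert a A)
  have "f s = 0" if sA: "\<forall>i\<in>A. s i \<in> \<nat>" for s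
  proof -
    obtain P where P: "\<forall>s r. P (s(a := r)) = P s" "\<forall>s. f s = poly (P s) (s a)"
      using Zpoly_univariate[OF f, of a] by blast
    have "poly (P s) (real m) = 0" for m
      using insert.prems[of "s(a := real m)"] sA insert.hyps(2) P by (metis fun_upd_apply of_nat_in_Nats insertE)
    then have "range real \<subseteq> {x. poly (P s) x = 0}" by auto
    moreover have "infinite (range (real :: nat \<Rightarrow> real))"
      by (rule range_inj_infinite) (simp add: inj_on_def)
    ultimately have "P s = 0" using poly_roots_finite finite_subset by blast
    then show "f s = 0" using P by simp
  qed
  then show ?case using insert.IH by blast
qed simp

lemma Zpoly_diff_degree: "f \<in> Zpoly \<Longrightarrow> \<exists>d. diff_degree_le d (\<lambda>k. f (\<lambda>i. real (k i)))"
proof (induction f rule: Zpoly.induct)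
  case (add p q)
  then show ?case using diff_degree_le_add by blast
next
  case (mult p q)
  then show ?case using diff_degree_le_mult by blast
qed (use diff_degree_le_const diff_degree_le_coord in blast)+

lemma Zpoly_Ints: "f \<in> Zpoly \<Longrightarrow> f (\<lambda>i. real (k i)) \<in> \<int>"
  by (induction f rule: Zpoly.induct) auto

subsection \<open>The simplicial ring in affine coordinates\<close>

definition chart :: "nat \<Rightarrow> (nat \<Rightarrow> real) \<Rightarrow> (nat \<Rightarrow> real)" where
  "chart n s = (\<lambda>i. if i = 0 then 1 - (\<Sum>j\<in>{1..n}. s j) else if i \<le> n then s i else 0)"

lemma sum_atMost_split_0: "(\<Sum>i\<le>(n::nat). f i) = f 0 + (\<Sum>i\<in>{1..n}. f i :: real)"
proof -
  have "{..n} = insert 0 {1..n}" by auto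
  then show ?thesis by simp
qed

lemma chart_in_hyperplane: "chart n s \<in> hyperplane n"
proof -
  have "(\<Sum>i\<in>{1..n}. chart n s i) = (\<Sum>i\<in>{1..n}. s i)"
    by (rule sum.cong) (auto simp: chart_def)
  then show ?thesis
    unfolding hyperplane_def by (simp add: sum_atMost_split_0) (simp add: chart_def)
qed

lemma chart_hyperplane: "t \<in> hyperplane n \<Longrightarrow> chart n t = t"
  unfolding hyperplane_def chart_def by (auto simp: fun_eq_iff sum_atMost_split_0)

lemma chart_cong: "(\<And>i. i \<in> {1..n} \<Longrightarrow> s i = s' i) \<Longrightarrow> chart n s = chart n s'"
  unfolding chart_def by (auto simp: fun_eq_iff intro!: sum.cong)

lemma int_polyfun_chart: "p \<in> int_polyfun n \<Longrightarrow> (\<lambda>s. p (chart n s)) \<in> Zpoly"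
proof (induction p rule: int_polyfun.induct)
  case (var i)
  have "(\<lambda>s. 1 - (\<Sum>j\<in>{1..n}. s j)) \<in> Zpoly"
    using Zpoly_diff[OF Zpoly.const[of 1] Zpoly_sum[of "{1..n}" "\<lambda>j s. s j"]]
    by (simp add: Zpoly.coord)
  with var show ?case by (cases "i = 0") (auto simp: chart_def Zpoly.coord)
qed (auto simp: Zpoly.intros)

definition lattice_values :: "nat \<Rightarrow> ((nat \<Rightarrow> real) \<Rightarrow> real) \<Rightarrow> lattice_fun" where
  "lattice_values n g = (\<lambda>k. g (chart n (\<lambda>j. real (k j))))"

lemma Zdelta_Zpoly:
  assumes "g \<in> Zdelta n"
  shows "\<exists>f\<in>Zpoly. (\<forall>s. g (chart n s) = f s) \<and> (\<forall>t. g t = (if t \<in> hyperplane n then f t else 0))"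
proof -
  obtain p where p: "p \<in> int_polyfun n" "g = (\<lambda>t. if t \<in> hyperplane n then p t else 0)"
    using assms unfolding Zdelta_def by blast
  show ?thesis
  proof (intro bexI conjI allI)
    show "(\<lambda>s. p (chart n s)) \<in> Zpoly" using p(1) by (rule int_polyfun_chart)
  qed (auto simp: p(2) chart_in_hyperplane chart_hyperplane)
qed

lemma Zdelta_lattice_values:
  assumes "g \<in> Zdelta n"
  obtains f where "f \<in> Zpoly" and "lattice_values n g = (\<lambda>k. f (\<lambda>j. real (k j)))"
proof -
  obtain f where "f \<in> Zpoly" "\<And>s. g (chart n s) = f s" using Zdelta_Zpoly[OF assms] by blast
  then show ?thesis using that by (simp add: lattice_values_def)
qed

lemma Zdelta_coeff_Ints: "g \<in> Zdelta n \<Longrightarrow> fdiffs w (lattice_values n g) k \<in> \<int>"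
  by (erule Zdelta_lattice_values) (simp add: fdiffs_Ints Zpoly_Ints)

lemma Zdelta_diff_degree: "g \<in> Zdelta n \<Longrightarrow> \<exists>d. diff_degree_le d (lattice_values n g)"
  by (erule Zdelta_lattice_values) (simp add: Zpoly_diff_degree)

lemma Zdelta_coeffs_finite:
  assumes "g \<in> Zdelta n"
  shows "finite {w. set w \<subseteq> {1..n} \<and> fdiffs w (lattice_values n g) (\<lambda>_. 0) \<noteq> 0}"
proof -
  obtain d where d: "diff_degree_le d (lattice_values n g)"
    using Zdelta_diff_degree[OF assms] by blast
  have "{w. set w \<subseteq> {1..n} \<and> fdiffs w (lattice_values n g) (\<lambda>_. 0) \<noteq> 0}
      \<subseteq> {w. set w \<subseteq> {1..n} \<and> length w \<le> d}"
    using d unfolding diff_degree_le_def by (auto intro: leI)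
  then show ?thesis by (rule finite_subset) (rule finite_lists_length_le, simp)
qed

text \<open>An element of \<open>Zdelta n\<close> is determined by its Newton coefficients: if they vanish,
  the polynomial vanishes on all points of the chart with natural coordinates, hence everywhere.\<close>

lemma Zdelta_coeffs_zero:
  assumes g: "g \<in> Zdelta n"
    and zero: "\<And>w. set w \<subseteq> {1..n} \<Longrightarrow> fdiffs w (lattice_values n g) (\<lambda>_. 0) = 0"
  shows "g = (\<lambda>_. 0)"
proof -
  obtain f where f: "f \<in> Zpoly" "\<And>s. g (chart n s) = f s"
    "\<And>t. g t = (if t \<in> hyperplane n then f t else 0)"
    using Zdelta_Zpoly[OF g] by blast
  have "f s = 0" if nat: "\<forall>i\<in>{1..n}. s i \<in> \<nat>" for s
  proof -
    define k where "k i = (if i \<in> {1..n} then nat \<lfloor>s i\<rfloor> else 0)" for i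
    have "s i = real (k i)" if "i \<in> {1..n}" for i
    proof -
      have "s i \<in> \<nat>" using nat that by blast
      then obtain m where "s i = real m" by (rule Nats_cases)
      then show ?thesis using that by (simp add: k_def)
    qed
    then have "chart n s = chart n (\<lambda>j. real (k j))" by (rule chart_cong)
    then have "f s = lattice_values n g k" by (simp add: lattice_values_def flip: f(2))
    also have "\<dots> = 0"
      by (rule fdiffs_at_origin_zero[of "{1..n}", OF _ zero]) (auto simp: k_def)
    finally show ?thesis .
  qed
  then have "f s = 0" for s using Zpoly_vanishes[OF f(1), of "{1..n}"] by blast
  then show ?thesis by (auto simp: f(3) fun_eq_iff)
qed

lemma Zdelta_zero: "(\<lambda>_. 0) \<in> Zdelta n"
  unfolding Zdelta_def using int_polyfun.const[of 0 n] by (auto intro!: exI[of _ "\<lambda>_. 0"])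

lemma Zdelta_diff:
  assumes "f \<in> Zdelta n" and "g \<in> Zdelta n"
  shows "(\<lambda>t. f t - g t) \<in> Zdelta n"
proof -
  obtain p q where p: "p \<in> int_polyfun n" "f = (\<lambda>t. if t \<in> hyperplane n then p t else 0)"
    and q: "q \<in> int_polyfun n" "g = (\<lambda>t. if t \<in> hyperplane n then q t else 0)"
    using assms unfolding Zdelta_def by blast
  have "(\<lambda>t. p t + -1 * q t) \<in> int_polyfun n"
    using p(1) q(1) by (intro int_polyfun.add int_polyfun.mult int_polyfun.const[of "-1", simplified])
  moreover have "(\<lambda>t. f t - g t) = (\<lambda>t. if t \<in> hyperplane n then p t + -1 * q t else 0)"
    using p q by auto
  ultimately show ?thesis
    unfolding Zdelta_def by (intro CollectI exI[of _ "\<lambda>t. p t + -1 * q t"]) simp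
qed

lemma ZX_fin_zero: "0 \<in> ZX_fin X act"
  unfolding ZX_fin_def ZX_def finitely_supported_def support_def
  by (simp add: zero_fun_def Zdelta_zero pull_def)

lemma ZX_fin_diff:
  assumes a: "a \<in> ZX_fin X act" and b: "b \<in> ZX_fin X act"
  shows "a - b \<in> ZX_fin X act"
proof -
  have ab: "(a - b) n x = (\<lambda>t. a n x t - b n x t)" for n x by (simp add: fun_eq_iff)
  have "a - b \<in> ZX X act"
    using a b unfolding ZX_fin_def ZX_def ab by (auto simp: Zdelta_diff pull_def)
  moreover have "support X act (a - b) n \<subseteq> support X act a n \<union> support X act b n" for n
  proof
    fix y assume "y \<in> support X act (a - b) n"
    then obtain \<theta> k x where y: "y = act \<theta> n k x" "mono_map \<theta> n k" "x \<in> X k"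
      and "(a - b) k x \<noteq> (\<lambda>_. 0)" unfolding support_def by blast
    then have "a k x \<noteq> (\<lambda>_. 0) \<or> b k x \<noteq> (\<lambda>_. 0)" by (auto simp: fun_eq_iff)
    then show "y \<in> support X act a n \<union> support X act b n" using y unfolding support_def by blast
  qed
  then have "{(n, y). y \<in> support X act (a - b) n \<and> nondegenerate X act n y} \<subseteq>
      {(n, y). y \<in> support X act a n \<and> nondegenerate X act n y} \<union>
      {(n, y). y \<in> support X act b n \<and> nondegenerate X act n y}" by blast
  then have "finitely_supported X act (a - b)"
    using a b unfolding ZX_fin_def finitely_supported_def by (auto intro: finite_subset)
  ultimately show ?thesis unfolding ZX_fin_def by blast
qed

text \<open>A natural family vanishing on all nondegenerate simplices vanishes: every degenerate
  simplex is pulled back from a simplex of lower dimension.\<close>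

lemma ZX_zero_on_nondegenerate:
  assumes \<phi>: "\<phi> \<in> ZX X act" and nd: "\<And>n x. nondegenerate X act n x \<Longrightarrow> \<phi> n x = (\<lambda>_. 0)"
  shows "\<phi> = 0"
proof -
  have "\<phi> n x = (\<lambda>_. 0)" for n x
  proof (induction n arbitrary: x rule: less_induct)
    case (less n)
    consider "x \<notin> X n" | "nondegenerate X act n x" | "degenerate X act n x"
      unfolding nondegenerate_def by blast
    then show ?case
    proof cases
      case 1
      then show ?thesis using \<phi> unfolding ZX_def by auto
    next
      case 2
      then show ?thesis by (rule nd)
    next
      case 3
      then obtain m \<theta> y where "m < n" "mono_map \<theta> n m" "y \<in> X m" "x = act \<theta> n m y"
        unfolding degenerate_def by blast
      then show ?thesis using \<phi> less.IH unfolding ZX_def by (auto simp: pull_def)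
    qed
  qed
  then show ?thesis by (simp add: fun_eq_iff)
qed

lemma ZX_fin_nondegenerate_finite:
  assumes X: "simplicial_set X act" and \<phi>: "\<phi> \<in> ZX_fin X act"
  shows "finite {(n, x). nondegenerate X act n x \<and> \<phi> n x \<noteq> (\<lambda>_. 0)}"
proof (rule finite_subset)
  have "x \<in> support X act \<phi> n" if "x \<in> X n" "\<phi> n x \<noteq> (\<lambda>_. 0)" for n x
  proof -
    have "mono_map id n n" by (simp add: mono_map_def)
    moreover have "act id n n x = x" using X that(1) unfolding simplicial_set_def by blast
    ultimately show ?thesis using that unfolding support_def by force
  qed
  then show "{(n, x). nondegenerate X act n x \<and> \<phi> n x \<noteq> (\<lambda>_. 0)} \<subseteq>
      {(n, y). y \<in> support X act \<phi> n \<and> nondegenerate X act n y}"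
    by (auto simp: nondegenerate_def)
  show "finite {(n, y). y \<in> support X act \<phi> n \<and> nondegenerate X act n y}"
    using \<phi> unfolding ZX_fin_def finitely_supported_def by blast
qed

text \<open>The Newton coefficients of \<open>\<phi>\<close> at the nondegenerate simplices: the integer-valued
  functionals embedding \<open>\<int>\<^sup>(\<^sup>X\<^sup>)\<close> into a direct sum of copies of \<open>\<int>\<close>.\<close>

fun newton_coeff :: "(nat \<Rightarrow> 'a set) \<Rightarrow> ((nat \<Rightarrow> nat) \<Rightarrow> nat \<Rightarrow> nat \<Rightarrow> 'a \<Rightarrow> 'a) \<Rightarrow> nat \<times> 'a \<times> nat list
    \<Rightarrow> (nat \<Rightarrow> 'a \<Rightarrow> (nat \<Rightarrow> real) \<Rightarrow> real) \<Rightarrow> real" where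
  "newton_coeff X act (n, x, w) \<phi> =
     (if nondegenerate X act n x \<and> set w \<subseteq> {1..n}
      then fdiffs w (lattice_values n (\<phi> n x)) (\<lambda>_. 0) else 0)"

lemma newton_coeff_diff: "newton_coeff X act i (a - b) = newton_coeff X act i a - newton_coeff X act i b"
  by (cases i) (simp add: lattice_values_def fdiffs_diff)

lemma newton_coeff_Ints:
  assumes "\<phi> \<in> ZX X act"
  shows "newton_coeff X act i \<phi> \<in> \<int>"
proof (cases i)
  case (fields n x w)
  then show ?thesis
    using assms Zdelta_coeff_Ints unfolding ZX_def by (auto simp: nondegenerate_def)
qed

lemma newton_coeff_finite:
  assumes X: "simplicial_set X act" and \<phi>: "\<phi> \<in> ZX_fin X act"
  shows "finite {i. newton_coeff X act i \<phi> \<noteq> 0}"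
proof -
  define N where "N = {(n, x). nondegenerate X act n x \<and> \<phi> n x \<noteq> (\<lambda>_. 0)}"
  define W where "W n x = {w. set w \<subseteq> {1..n} \<and> fdiffs w (lattice_values n (\<phi> n x)) (\<lambda>_. 0) \<noteq> 0}"
    for n x
  have "{i. newton_coeff X act i \<phi> \<noteq> 0} \<subseteq> (\<Union>(n, x)\<in>N. Pair n ` Pair x ` W n x)"
  proof
    fix i assume "i \<in> {i. newton_coeff X act i \<phi> \<noteq> 0}"
    moreover obtain n x w where i: "i = (n, x, w)" by (cases i)
    ultimately have "nondegenerate X act n x" "w \<in> W n x"
      by (auto simp: W_def split: if_splits)
    moreover from this(2) have "\<phi> n x \<noteq> (\<lambda>_. 0)" by (auto simp: W_def lattice_values_def)
    ultimately show "i \<in> (\<Union>(n, x)\<in>N. Pair n ` Pair x ` W n x)" using i N_def by blast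
  qed
  moreover have "finite (W n x)" if "(n, x) \<in> N" for n x
    using that \<phi> Zdelta_coeffs_finite unfolding N_def W_def ZX_fin_def ZX_def nondegenerate_def
    by auto
  then have "finite (\<Union>(n, x)\<in>N. Pair n ` Pair x ` W n x)"
    using ZX_fin_nondegenerate_finite[OF X \<phi>] unfolding N_def by auto
  ultimately show ?thesis by (rule finite_subset)
qed

lemma newton_coeff_injective:
  assumes \<phi>: "\<phi> \<in> ZX X act" and zero: "\<And>i. newton_coeff X act i \<phi> = 0"
  shows "\<phi> = 0"
proof (rule ZX_zero_on_nondegenerate[OF \<phi>])
  fix n x assume nd: "nondegenerate X act n x"
  then have "\<phi> n x \<in> Zdelta n" using \<phi> unfolding ZX_def nondegenerate_def by blast
  then show "\<phi> n x = (\<lambda>_. 0)"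
  proof (rule Zdelta_coeffs_zero)
    fix w assume "set w \<subseteq> {1..n}"
    then show "fdiffs w (lattice_values n (\<phi> n x)) (\<lambda>_. 0) = 0" using zero[of "(n, x, w)"] nd by simp
  qed
qed

text \<open>Being integers, the Newton coefficients are given by integer-valued functionals, which
  are additive, finitely supported and jointly injective on \<open>\<int>\<^sup>(\<^sup>X\<^sup>)\<close>.\<close>

definition int_coeff :: "(nat \<Rightarrow> 'a set) \<Rightarrow> ((nat \<Rightarrow> nat) \<Rightarrow> nat \<Rightarrow> nat \<Rightarrow> 'a \<Rightarrow> 'a)
    \<Rightarrow> nat \<times> 'a \<times> nat list \<Rightarrow> (nat \<Rightarrow> 'a \<Rightarrow> (nat \<Rightarrow> real) \<Rightarrow> real) \<Rightarrow> int" where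
  "int_coeff X act i \<phi> = \<lfloor>newton_coeff X act i \<phi>\<rfloor>"

lemma newton_coeff_eq_int_coeff:
  "\<phi> \<in> ZX_fin X act \<Longrightarrow> newton_coeff X act i \<phi> = of_int (int_coeff X act i \<phi>)"
  using newton_coeff_Ints[of \<phi> X act i] unfolding ZX_fin_def int_coeff_def by (auto elim: Ints_cases)

lemma int_coeff_diff:
  assumes "a \<in> ZX_fin X act" and "b \<in> ZX_fin X act"
  shows "int_coeff X act i (a - b) = int_coeff X act i a - int_coeff X act i b"
  using newton_coeff_diff[of X act i a b] ZX_fin_diff[OF assms] assms
  by (simp add: newton_coeff_eq_int_coeff flip: of_int_diff)

lemma int_coeff_finite:
  assumes "simplicial_set X act" and "\<phi> \<in> ZX_fin X act"
  shows "finite {i. int_coeff X act i \<phi> \<noteq> 0}"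
  using newton_coeff_finite[OF assms] newton_coeff_eq_int_coeff[OF assms(2)] by simp

lemma int_coeff_injective:
  assumes "\<phi> \<in> ZX_fin X act" and "\<forall>i. int_coeff X act i \<phi> = 0"
  shows "\<phi> = 0"
proof (rule newton_coeff_injective)
  show "\<phi> \<in> ZX X act" using assms(1) unfolding ZX_fin_def by blast
  show "newton_coeff X act i \<phi> = 0" for i
    using newton_coeff_eq_int_coeff[OF assms(1), of i] assms(2) by simp
qed

theorem lemma9p3:
  fixes X :: "nat \<Rightarrow> 'a set" and act :: "(nat \<Rightarrow> nat) \<Rightarrow> nat \<Rightarrow> nat \<Rightarrow> 'a \<Rightarrow> 'a"
  assumes "simplicial_set X act" and "locally_finite X act"
  shows "free_abelian_subgroup (ZX_fin X act)"
proof (rule free_abelian_subgroupI[where L = "int_coeff X act"])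
  show "0 \<in> ZX_fin X act" by (rule ZX_fin_zero)
  show "a - b \<in> ZX_fin X act" if "a \<in> ZX_fin X act" "b \<in> ZX_fin X act" for a b
    using that by (rule ZX_fin_diff)
  show "int_coeff X act i (a - b) = int_coeff X act i a - int_coeff X act i b"
    if "a \<in> ZX_fin X act" "b \<in> ZX_fin X act" for i a b
    using that by (rule int_coeff_diff)
  show "finite {i. int_coeff X act i \<phi> \<noteq> 0}" if "\<phi> \<in> ZX_fin X act" for \<phi>
    using assms(1) that by (rule int_coeff_finite)
  show "\<phi> = 0" if "\<phi> \<in> ZX_fin X act" "\<forall>i. int_coeff X act i \<phi> = 0" for \<phi>
    using that by (rule int_coeff_injective)
qed

end
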